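(* Let $b,c:\mathbb{R}\to[0,\infty)$ be continuous, let $t_0\in\mathbb{R}$, $x_0>0$, $y_0>0$, $z_0\ge 0$, and put $N=x_0+y_0+z_0$ and $\kappa=\frac{y_0}{x_0}$. Consider the system $$x'=-\frac{b(t)xy}{x+y},\qquad y'=\frac{b(t)xy}{x+y}-c(t)y,\qquad z'=c(t)y,$$ with $x,y>0$ and $x(t_0)=x_0$, $y(t_0)=y_0$, $z(t_0)=z_0$. Then the solution is given by $$x(t)=x_0\exp\left\{-\kappa\int_{t_0}^t b(s)\left(\kappa+e^{\int_{t_0}^s (c-b)(\tau)\,d\tau}\right)^{-1}ds\right\},$$ $$y(t)=y_0\exp\left\{\int_{t_0}^t\left[b(s)\left(1+\kappa e^{\int_{t_0}^s (b-c)(\tau)\,d\tau}\right)^{-1}-c(s)\right]ds\right\},$$ $$z(t)=N-\left(y_0e^{\int_{t_0}^t (b-c)(s)\,ds}+x_0\right)\exp\left\{-\kappa\int_{t_0}^t b(s)\left(\kappa+e^{\int_{t_0}^s (c-b)(\tau)\,d\tau}\right)^{-1}ds\right\}.$$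
   Context: $x$, $y$, $z$ denote the susceptible, infected and removed populations, respectively, as functions of real time $t$. *)

theory Defs
  imports "HOL-Analysis.Analysis"
begin

definition oint :: "real \<Rightarrow> real \<Rightarrow> (real \<Rightarrow> real) \<Rightarrow> real" where
  "oint a b f = (if a \<le> b then integral {a..b} f else - integral {b..a} f)"

end

theory Submission
  imports Defs
begin

text \<open>The ratio \<open>r = y / x\<close> obeys the linear equation \<open>r' = (b - c) r\<close>, hence
  \<open>r = \<kappa> exp (\<integral>(b - c))\<close>. Substituting \<open>y = r x\<close> turns the equations for \<open>x\<close> and
  \<open>y\<close> into scalar linear equations \<open>f' = g f\<close> with explicit continuous coefficients,
  solved by \<open>f = f(t\<^sub>0) exp (\<integral>g)\<close>. Finally \<open>x + y + z\<close> is conserved, which gives \<open>z\<close>.\<close>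

lemma oint_self [simp]: "oint a a f = 0"
  unfolding oint_def by simp

lemma oint_eq_integral_diff:
  assumes f: "continuous_on UNIV f" and "m \<le> a" "m \<le> t"
  shows "oint a t f = integral {m..t} f - integral {m..a} f"
proof -
  have int: "f integrable_on {u..v}" for u v
    by (rule integrable_continuous_interval, rule continuous_on_subset[OF f]) auto
  show ?thesis
    using Henstock_Kurzweil_Integration.integral_combine[where a=m and c=a and b=t and f=f]
      Henstock_Kurzweil_Integration.integral_combine[where a=m and c=t and b=a and f=f] assms int
    unfolding oint_def by (cases "a \<le> t") auto
qed

lemma has_real_derivative_oint:
  assumes f: "continuous_on UNIV f"
  shows "((\<lambda>t. oint a t f) has_real_derivative f t) (at t)"
proof -
  define m where "m = min a t - 1"
  define M where "M = max a t + 1"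
  have t_in: "t \<in> {m<..<M}"
    unfolding m_def M_def by auto
  have "((\<lambda>s. integral {m..s} f) has_real_derivative f t) (at t within {m..M})"
    by (rule integral_has_real_derivative, rule continuous_on_subset[OF f]) (use t_in in auto)
  moreover have "at t within {m..M} = at t"
    by (rule at_within_interior) (use t_in in auto)
  ultimately have "((\<lambda>s. integral {m..s} f - integral {m..a} f) has_real_derivative f t) (at t)"
    by (auto intro!: derivative_eq_intros)
  then show ?thesis
  proof (rule has_field_derivative_transform_within_open)
    show "integral {m..s} f - integral {m..a} f = oint a s f" if "s \<in> {m<..<M}" for s
      using that by (intro oint_eq_integral_diff[symmetric, OF f]) (auto simp: m_def)
  qed (use t_in in auto)
qed

lemma continuous_on_oint:
  assumes "continuous_on UNIV f"
  shows "continuous_on UNIV (\<lambda>t. oint a t f)"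
  using DERIV_isCont[OF has_real_derivative_oint[OF assms]]
  by (intro continuous_at_imp_continuous_on) blast

lemma oint_uminus: "oint a t (\<lambda>s. - f s) = - oint a t f"
  unfolding oint_def by (simp add: integral_neg)

lemma linear_ode_solution:
  fixes f g G :: "real \<Rightarrow> real"
  assumes G: "\<And>t. (G has_real_derivative g t) (at t)"
    and f: "\<And>t. (f has_real_derivative g t * f t) (at t)"
  shows "f t = f t0 * exp (G t - G t0)"
proof -
  have "((\<lambda>t. f t * exp (- G t)) has_real_derivative 0) (at t)" for t
    using f[of t] G[of t] by (auto intro!: derivative_eq_intros)
  then have "f t * exp (- G t) = f t0 * exp (- G t0)"
    by (rule DERIV_isconst_all[rule_format])
  then show ?thesis
    by (simp add: exp_diff exp_minus field_simps)
qed

lemma linear_ode_solution_oint: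
  fixes f g :: "real \<Rightarrow> real"
  assumes "continuous_on UNIV g" and "\<And>t. (f has_real_derivative g t * f t) (at t)"
  shows "f t = f t0 * exp (oint t0 t g)"
proof -
  have "f t = f t0 * exp (oint t0 t g - oint t0 t0 g)"
    using has_real_derivative_oint[OF assms(1)] assms(2) by (rule linear_ode_solution)
  then show ?thesis
    by simp
qed

lemma has_real_derivative_divide_growth_rates:
  fixes f g :: "real \<Rightarrow> real"
  assumes "(f has_real_derivative p * f t) (at t)" and "(g has_real_derivative q * g t) (at t)"
    and "g t \<noteq> 0"
  shows "((\<lambda>t. f t / g t) has_real_derivative (p - q) * (f t / g t)) (at t)"
  using assms by (auto intro!: derivative_eq_intros simp: field_simps power2_eq_square)

locale sir_system =
  fixes b c x y z :: "real \<Rightarrow> real"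
  assumes b_cont: "continuous_on UNIV b" and c_cont: "continuous_on UNIV c"
    and x_pos: "\<And>t. x t > 0" and y_pos: "\<And>t. y t > 0"
    and x_ode: "\<And>t. (x has_real_derivative (- b t * x t * y t / (x t + y t))) (at t)"
    and y_ode: "\<And>t. (y has_real_derivative (b t * x t * y t / (x t + y t) - c t * y t)) (at t)"
    and z_ode: "\<And>t. (z has_real_derivative (c t * y t)) (at t)"
begin

lemma x_growth: "(x has_real_derivative - (b t * (y t / x t) / (1 + y t / x t)) * x t) (at t)"
proof -
  have "- b t * x t * y t / (x t + y t) = - (b t * (y t / x t) / (1 + y t / x t)) * x t"
    using x_pos[of t] y_pos[of t] by (simp add: field_simps)
  then show ?thesis
    using x_ode[of t] by simp
qed

lemma y_growth: "(y has_real_derivative (b t / (1 + y t / x t) - c t) * y t) (at t)"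
proof -
  have "b t * x t * y t / (x t + y t) - c t * y t = (b t / (1 + y t / x t) - c t) * y t"
    using x_pos[of t] y_pos[of t] by (simp add: field_simps)
  then show ?thesis
    using y_ode[of t] by simp
qed

lemma ratio_ode: "((\<lambda>t. y t / x t) has_real_derivative (b t - c t) * (y t / x t)) (at t)"
proof -
  define r where "r = y t / x t"
  have "1 + r \<noteq> 0"
    unfolding r_def using x_pos[of t] y_pos[of t]
    by (simp add: add_pos_pos order.strict_implies_not_eq[symmetric])
  then have "b t / (1 + r) + b t * r / (1 + r) = b t"
    by (metis add_divide_distrib distrib_left mult.right_neutral nonzero_mult_div_cancel_right)
  then have rate: "(b t / (1 + r) - c t) - - (b t * r / (1 + r)) = b t - c t"
    by simp
  have "((\<lambda>t. y t / x t) has_real_derivative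
      ((b t / (1 + r) - c t) - - (b t * r / (1 + r))) * (y t / x t)) (at t)"
    unfolding r_def
    by (rule has_real_derivative_divide_growth_rates[OF y_growth x_growth]) (use x_pos[of t] in simp)
  then show ?thesis
    unfolding rate .
qed

lemma ratio_eq: "y t / x t = y t0 / x t0 * exp (oint t0 t (\<lambda>\<tau>. b \<tau> - c \<tau>))"
  using b_cont c_cont
  by (intro linear_ode_solution_oint ratio_ode continuous_intros)

lemma x_eq:
  "x t = x t0 * exp (- (y t0 / x t0) * oint t0 t (\<lambda>s. b s /
     (y t0 / x t0 + exp (oint t0 s (\<lambda>\<tau>. c \<tau> - b \<tau>)))))"
proof -
  define k where "k = y t0 / x t0"
  define B where "B s = oint t0 s (\<lambda>\<tau>. b \<tau> - c \<tau>)" for s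
  define g where "g s = b s / (k + exp (oint t0 s (\<lambda>\<tau>. c \<tau> - b \<tau>)))" for s
  have k_pos: "k > 0"
    unfolding k_def using x_pos y_pos by simp
  have exp_oint_c_b: "exp (oint t0 s (\<lambda>\<tau>. c \<tau> - b \<tau>)) = inverse (exp (B s))" for s
    using oint_uminus[of t0 s "\<lambda>\<tau>. b \<tau> - c \<tau>"] by (simp add: B_def exp_minus)
  have "continuous_on UNIV B"
    unfolding B_def using b_cont c_cont by (intro continuous_on_oint continuous_intros)
  then have "continuous_on UNIV (\<lambda>s. b s / (k + inverse (exp (B s))))"
    using b_cont k_pos
    by (intro continuous_intros) (auto simp: add_pos_pos intro!: order.strict_implies_not_eq[symmetric])
  then have g_cont: "continuous_on UNIV g"
    unfolding g_def exp_oint_c_b .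
  have "(x has_real_derivative - k * g s * x s) (at s)" for s
  proof -
    have "b s * (y s / x s) / (1 + y s / x s) = k * g s"
      unfolding ratio_eq[of s t0] g_def exp_oint_c_b using k_pos by (simp add: k_def B_def field_simps)
    then show ?thesis
      using x_growth[of s] by simp
  qed
  moreover have "((\<lambda>s. - k * oint t0 s g) has_real_derivative - k * g s) (at s)" for s
    by (intro DERIV_cmult has_real_derivative_oint[OF g_cont])
  ultimately have "x t = x t0 * exp (- k * oint t0 t g - - k * oint t0 t0 g)"
    by (intro linear_ode_solution)
  then show ?thesis
    unfolding k_def g_def[abs_def] by simp
qed

lemma y_eq:
  "y t = y t0 * exp (oint t0 t (\<lambda>s. b s /
     (1 + (y t0 / x t0) * exp (oint t0 s (\<lambda>\<tau>. b \<tau> - c \<tau>))) - c s))"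
proof (rule linear_ode_solution_oint)
  have "continuous_on UNIV (\<lambda>s. oint t0 s (\<lambda>\<tau>. b \<tau> - c \<tau>))"
    using b_cont c_cont by (intro continuous_on_oint continuous_intros)
  then show "continuous_on UNIV
      (\<lambda>s. b s / (1 + (y t0 / x t0) * exp (oint t0 s (\<lambda>\<tau>. b \<tau> - c \<tau>))) - c s)"
    using b_cont c_cont x_pos y_pos
    by (intro continuous_intros) (auto simp: add_pos_pos intro!: order.strict_implies_not_eq[symmetric])
  show "(y has_real_derivative
      (b s / (1 + (y t0 / x t0) * exp (oint t0 s (\<lambda>\<tau>. b \<tau> - c \<tau>))) - c s) * y s) (at s)" for s
    using y_growth[of s] unfolding ratio_eq[of s t0] .
qed

lemma total_population_const: "x t + y t + z t = x t0 + y t0 + z t0"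
proof -
  have "((\<lambda>t. x t + y t + z t) has_real_derivative 0) (at t)" for t
    using DERIV_add[OF DERIV_add[OF x_ode y_ode] z_ode, of t] by simp
  then show ?thesis
    by (rule DERIV_isconst_all[rule_format])
qed

lemma z_eq:
  "z t = (x t0 + y t0 + z t0) - (y t0 * exp (oint t0 t (\<lambda>s. b s - c s)) + x t0) *
     exp (- (y t0 / x t0) * oint t0 t (\<lambda>s. b s /
     (y t0 / x t0 + exp (oint t0 s (\<lambda>\<tau>. c \<tau> - b \<tau>)))))"
proof -
  have "y t = y t0 / x t0 * exp (oint t0 t (\<lambda>\<tau>. b \<tau> - c \<tau>)) * x t"
    using ratio_eq[of t t0] x_pos[of t] by (simp add: field_simps)
  then show ?thesis
    using total_population_const[of t t0] x_eq[of t t0] x_pos[of t0] by (simp add: field_simps)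
qed

end

theorem mainTheorem1:
  fixes b c x y z :: "real \<Rightarrow> real" and t0 x0 y0 z0 :: real
  assumes b_cont: "continuous_on UNIV b" and b_nonneg: "\<And>t. b t \<ge> 0"
    and c_cont: "continuous_on UNIV c" and c_nonneg: "\<And>t. c t \<ge> 0"
    and x0_pos: "x0 > 0" and y0_pos: "y0 > 0" and z0_nonneg: "z0 \<ge> 0"
    and x_pos: "\<And>t. x t > 0" and y_pos: "\<And>t. y t > 0"
    and x_ode: "\<And>t. (x has_real_derivative (- b t * x t * y t / (x t + y t))) (at t)"
    and y_ode: "\<And>t. (y has_real_derivative (b t * x t * y t / (x t + y t) - c t * y t)) (at t)"
    and z_ode: "\<And>t. (z has_real_derivative (c t * y t)) (at t)"
    and x_init: "x t0 = x0" and y_init: "y t0 = y0" and z_init: "z t0 = z0"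
  shows "\<forall>t.
     x t = x0 * exp (- (y0 / x0) * oint t0 t (\<lambda>s. b s /
              (y0 / x0 + exp (oint t0 s (\<lambda>\<tau>. c \<tau> - b \<tau>))))) \<and>
     y t = y0 * exp (oint t0 t (\<lambda>s. b s /
              (1 + (y0 / x0) * exp (oint t0 s (\<lambda>\<tau>. b \<tau> - c \<tau>))) - c s)) \<and>
     z t = (x0 + y0 + z0) - (y0 * exp (oint t0 t (\<lambda>s. b s - c s)) + x0) *
              exp (- (y0 / x0) * oint t0 t (\<lambda>s. b s /
              (y0 / x0 + exp (oint t0 s (\<lambda>\<tau>. c \<tau> - b \<tau>)))))"
proof -
  interpret sir_system b c x y z
    using b_cont c_cont x_pos y_pos x_ode y_ode z_ode by unfold_locales
  show ?thesis
    using x_eq[of _ t0] y_eq[of _ t0] z_eq[of _ t0]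
    unfolding x_init y_init z_init by blast
qed

end
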